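(* Let $k\in\mathbb{N}_0$ and $n_0 = \left[\frac{k+2}{3}\right]$, $n_1 = \left[\frac{k+1}{3}\right]$, $n_2 = \left[\frac{k}{3}\right]$. The monic biorthogonal polynomial $p_k$ of degree $k$ satisfies $$\int_{\mathbb{R}} p_k(x)\,x^i\,w_j(x)\,dx = 0\qquad\text{for } i=0,1,\dots,n_j-1,\ j=0,1,2.$$ Conversely, if $f$ is a monic polynomial of degree $k$ satisfying $\int_{\mathbb{R}} f(x)x^iw_j(x)\,dx=0$ for $i=0,\dots,n_j-1$, $j=0,1,2$, then $f=p_k$. That is, these relations characterize $p_k$ among all monic polynomials of degree $k$.
   Context: Standing assumptions: $V:\mathbb{R}\to\mathbb{R}$ is continuous, $W$ is a real polynomial of degree $4$ with positive leading coefficient, and $\tau\in\mathbb{R}$, $\tau\neq 0$, such that $\iint |x|^a|y|^b e^{-V(x)-W(y)+2\tau xy}\,dx\,dy<\infty$ for all integers $a,b\ge0$. Define $w_j(x) = \int_{\mathbb{R}} y^j e^{-V(x)-W(y)+2\tau xy}\,dy$ for $j=0,1,2$. The monic biorthogonal polynomial $p_k$ of degree $k$ is the unique monic polynomial of degree $k$ such that $\iint p_k(x)\,q(y)\,e^{-V(x)-W(y)+2\tau xy}\,dx\,dy=0$ for every polynomial $q$ of degree at most $k-1$ (equivalently, the $p_k$ in the unique pair of sequences of monic polynomials $(p_k),(q_j)$, $\deg p_k=k$, $\deg q_j=j$, with $\iint p_k(x)q_j(y)e^{-V(x)-W(y)+2\tau xy}dxdy=0$ for $j\ne k$). $[\cdot]$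 denotes the integer part. *)

theory Defs
  imports "HOL-Analysis.Analysis" "HOL-Computational_Algebra.Polynomial"
begin

definition jweight :: "(real \<Rightarrow> real) \<Rightarrow> real poly \<Rightarrow> real \<Rightarrow> real \<Rightarrow> real \<Rightarrow> real" where
  "jweight V W \<tau> x y = exp (- V x - poly W y + 2 * \<tau> * x * y)"

definition wj :: "(real \<Rightarrow> real) \<Rightarrow> real poly \<Rightarrow> real \<Rightarrow> nat \<Rightarrow> real \<Rightarrow> real" where
  "wj V W \<tau> j x = (\<integral>y. y ^ j * jweight V W \<tau> x y \<partial>lborel)"

definition biorth :: "(real \<Rightarrow> real) \<Rightarrow> real poly \<Rightarrow> real \<Rightarrow> nat \<Rightarrow> real poly \<Rightarrow> bool" where
  "biorth V W \<tau> k p \<longleftrightarrow>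
     (\<forall>q :: real poly. degree q < k \<longrightarrow>
        (\<integral>z. poly p (fst z) * poly q (snd z) * jweight V W \<tau> (fst z) (snd z) \<partial>(lborel \<Otimes>\<^sub>M lborel)) = 0)"

text \<open>The monic biorthogonal polynomial p_k of degree k (unique by the standing assumptions).\<close>
definition bop :: "(real \<Rightarrow> real) \<Rightarrow> real poly \<Rightarrow> real \<Rightarrow> nat \<Rightarrow> real poly" where
  "bop V W \<tau> k = (THE p. lead_coeff p = 1 \<and> degree p = k \<and> biorth V W \<tau> k p)"

end

(*
  Write B p q (pairing p q) for the integral of p(x) q(y) exp (-V(x) - W(y) + 2 tau x y).
  Integrating by parts in y gives B (x p) q = B p (T q) with T q = (W' q - q') / (2 tau)
  (x_adjoint q), and T raises degrees by exactly 3 because deg W' = 3. Hence the integral of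
  f x^i w_j equals B f (T^i y^j), and the polynomials T^i y^j with j < 3 and 3 i + j < k span all
  polynomials of degree < k; counting the admissible i for each j gives n_j = [(k + 2 - j) / 3].

  Existence and uniqueness of p_k amount to nondegeneracy of B. For p /= 0 the transform
  G(y) = integral of p(x) exp (-V(x) + 2 tau x y) dx has at most deg p real zeros, by a
  Descartes-type rule (Rolle's theorem applied to exp (-2 tau r y) G(y) removes one sign change
  of p at a time). So some s of degree <= deg p has the sign pattern of G, and
  B p s = integral of s(y) exp (-W(y)) G(y) dy > 0.
*)

theory Submission
  imports Defs
begin

lemma Rolle_zero_of_deriv:
  fixes f f' :: "real \<Rightarrow> real"
  assumes der: "\<And>x. (f has_real_derivative f' x) (at x)"
    and "a < b" "f a = 0" "f b = 0"
  obtains z where "a < z" "z < b" "f' z = 0"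
proof -
  have "continuous_on {a..b} f"
    using der by (meson DERIV_isCont continuous_at_imp_continuous_on)
  then obtain z where "a < z" "z < b" "DERIV f z :> 0"
    using Rolle[of a b f] assms real_differentiable_def by auto
  with der DERIV_unique that show ?thesis by blast
qed

lemma card_zeros_le_Suc_card_deriv_zeros_below_Max:
  fixes f f' :: "real \<Rightarrow> real"
  assumes der: "\<And>x. (f has_real_derivative f' x) (at x)"
    and fin: "finite {x. f' x = 0}"
    and "finite S" "S \<noteq> {}" "\<And>x. x \<in> S \<Longrightarrow> f x = 0"
  shows "card S \<le> Suc (card ({x. f' x = 0} \<inter> {..<Max S}))"
  using assms(3-)
proof (induction "card S" arbitrary: S rule: less_induct)
  case less
  define m where "m = Max S"
  have m: "m \<in> S" using less.prems by (simp add: m_def)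
  show ?case
  proof (cases "S = {m}")
    case True
    then show ?thesis by simp
  next
    case False
    define S' where "S' = S - {m}"
    have S': "finite S'" "S' \<noteq> {}" "card S = Suc (card S')"
      using less.prems(1) m False card_Suc_Diff1[OF less.prems(1) m] by (auto simp: S'_def)
    define m' where "m' = Max S'"
    have "m' \<in> S'" using S' by (simp add: m'_def)
    then have "m' < m"
      using less.prems(1) by (auto simp: S'_def m_def order.not_eq_order_implies_strict)
    then obtain z where z: "m' < z" "z < m" "f' z = 0"
      using Rolle_zero_of_deriv[OF der] \<open>m' \<in> S'\<close> m less.prems(3) by (metis DiffD1 S'_def)
    have "card S' \<le> Suc (card ({x. f' x = 0} \<inter> {..<m'}))"
      using less.hyps[of S'] S' less.prems(3) by (simp add: S'_def m'_def)
    also have "Suc (card ({x. f' x = 0} \<inter> {..<m'})) = card (insert z ({x. f' x = 0} \<inter> {..<m'}))"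
      using fin z by simp
    also have "\<dots> \<le> card ({x. f' x = 0} \<inter> {..<m})"
      using fin z \<open>m' < m\<close> by (intro card_mono) auto
    finally show ?thesis using S' by (simp add: m_def)
  qed
qed

lemma finite_card_zeros_le_Suc_card_deriv_zeros:
  fixes f f' :: "real \<Rightarrow> real"
  assumes der: "\<And>x. (f has_real_derivative f' x) (at x)"
    and fin: "finite {x. f' x = 0}"
  shows "finite {x. f x = 0}" and "card {x. f x = 0} \<le> Suc (card {x. f' x = 0})"
proof -
  have bound: "card S \<le> Suc (card {x. f' x = 0})" if "finite S" "S \<subseteq> {x. f x = 0}" for S
  proof (cases "S = {}")
    case False
    have "card S \<le> Suc (card ({x. f' x = 0} \<inter> {..<Max S}))"
      using card_zeros_le_Suc_card_deriv_zeros_below_Max[OF der fin that(1) False] that(2) by blast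
    also have "\<dots> \<le> Suc (card {x. f' x = 0})"
      using fin by (simp add: card_mono)
    finally show ?thesis .
  qed simp
  show "finite {x. f x = 0}"
  proof (rule ccontr)
    assume "infinite {x. f x = 0}"
    then obtain S where "finite S" "card S = Suc (Suc (card {x. f' x = 0}))" "S \<subseteq> {x. f x = 0}"
      using infinite_arbitrarily_large by blast
    with bound show False by fastforce
  qed
  then show "card {x. f x = 0} \<le> Suc (card {x. f' x = 0})"
    using bound by blast
qed

lemma continuous_same_sign_if_no_zero_between:
  fixes f :: "real \<Rightarrow> real"
  assumes "continuous_on UNIV f" "\<And>t. min x y \<le> t \<Longrightarrow> t \<le> max x y \<Longrightarrow> f t \<noteq> 0"
  shows "0 < f x * f y"
proof (rule ccontr)
  assume "\<not> 0 < f x * f y"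
  then have "f (min x y) \<le> 0 \<and> 0 \<le> f (max x y) \<or> f (max x y) \<le> 0 \<and> 0 \<le> f (min x y)"
    by (cases "x \<le> y") (auto simp: zero_less_mult_iff not_less)
  moreover have "continuous_on {min x y..max x y} f"
    using assms(1) continuous_on_subset by blast
  ultimately obtain t where "min x y \<le> t" "t \<le> max x y" "f t = 0"
    using IVT'[of f "min x y" 0 "max x y"] IVT2'[of f "max x y" 0 "min x y"] by force
  with assms(2) show False by blast
qed

text \<open>Freezing \<open>f\<close> at \<open>a\<close> hides its possible zero \<open>z > a\<close>; the factor \<open>z - x\<close> has to be
  added exactly when \<open>f\<close> changes sign at \<open>z\<close>.\<close>

lemma sign_matching_product_extend:
  fixes f :: "real \<Rightarrow> real"
  assumes cont: "continuous_on UNIV f" and "a < z"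
    and no_zero: "\<And>t. a \<le> t \<Longrightarrow> t \<noteq> z \<Longrightarrow> f t \<noteq> 0"
    and frozen: "\<And>x. 0 \<le> \<sigma> * f (min x a) * (\<Prod>r\<leftarrow>rs. x - r)"
  shows "(\<forall>x. 0 \<le> \<sigma> * f x * (\<Prod>r\<leftarrow>rs. x - r))
    \<or> (\<forall>x. 0 \<le> - \<sigma> * f x * (\<Prod>r\<leftarrow>z # rs. x - r))"
proof -
  define P where "P x = (\<Prod>r\<leftarrow>rs. x - r)" for x
  define b where "b = z + 1"
  have left: "0 \<le> \<sigma> * f x * P x" if "x \<le> a" for x
    using frozen[of x] that by (simp add: P_def)
  have right: "0 \<le> (\<sigma> * f x * P x) * (f a * f x)" if "a \<le> x" for x
  proof -
    have "0 \<le> (\<sigma> * f a * P x) * (f x * f x)"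
      using frozen[of x] that by (simp add: P_def)
    then show ?thesis by (simp add: ac_simps)
  qed
  have sign_a: "0 < f a * f x" if "a \<le> x" "x \<le> z" "f x \<noteq> 0" for x
  proof (rule continuous_same_sign_if_no_zero_between[OF cont])
    fix t assume "min a x \<le> t" "t \<le> max a x"
    then show "f t \<noteq> 0" using that no_zero[of t] by (cases "t = x") auto
  qed
  have sign_b: "0 < f b * f x" if "z \<le> x" "f x \<noteq> 0" for x
  proof (rule continuous_same_sign_if_no_zero_between[OF cont])
    fix t assume "min b x \<le> t" "t \<le> max b x"
    then show "f t \<noteq> 0" using that no_zero[of t] \<open>a < z\<close> by (cases "t = x") (auto simp: b_def)
  qed
  have sign_trans: "0 < u * w" if "0 < u * v" "0 < v * w" for u v w :: real
    using that by (auto simp: zero_less_mult_iff)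
  have sign_flip: "u * w < 0" if "u * v < 0" "0 < v * w" for u v w :: real
    using that by (auto simp: zero_less_mult_iff mult_less_0_iff)
  have nonneg_factor: "0 \<le> u" if "0 \<le> u * v" "0 < v" for u v :: real
    using that by (auto simp: zero_le_mult_iff)
  have nonpos_factor: "u \<le> 0" if "0 \<le> u * v" "v < 0" for u v :: real
    using that by (auto simp: zero_le_mult_iff)
  have right_pos: "0 \<le> \<sigma> * f x * P x" if "a \<le> x" "0 < f a * f x" for x
    using nonneg_factor[OF right[OF that(1)] that(2)] .
  have right_neg: "\<sigma> * f x * P x \<le> 0" if "a \<le> x" "f a * f x < 0" for x
    using nonpos_factor[OF right[OF that(1)] that(2)] .
  have regions[case_names below zero middle above]:
    "(x \<le> a \<Longrightarrow> thesis) \<Longrightarrow> (f x = 0 \<Longrightarrow> thesis) \<Longrightarrow> (a \<le> x \<Longrightarrow> x \<le> z \<Longrightarrow> f x \<noteq> 0 \<Longrightarrow> thesis)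
      \<Longrightarrow> (z \<le> x \<Longrightarrow> f x \<noteq> 0 \<Longrightarrow> thesis) \<Longrightarrow> thesis" for x thesis
    by fastforce
  show ?thesis
  proof (cases "0 < f a * f b")
    case True
    have "0 \<le> \<sigma> * f x * P x" for x
      using \<open>a < z\<close> by (cases x rule: regions)
        (auto intro: left right_pos sign_a sign_trans[OF True sign_b])
    then show ?thesis by (simp add: P_def)
  next
    case False
    moreover have "f a \<noteq> 0" "f b \<noteq> 0" using no_zero \<open>a < z\<close> by (auto simp: b_def)
    ultimately have "f a * f b < 0" by (simp add: not_less order_le_less)
    have "0 \<le> \<sigma> * f x * P x * (z - x)" for x
    proof (cases x rule: regions)
      case below
      then show ?thesis using \<open>a < z\<close> by (intro mult_nonneg_nonneg[OF left]) auto
    next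
      case middle
      then show ?thesis by (intro mult_nonneg_nonneg right_pos sign_a) auto
    next
      case above
      then show ?thesis
        using \<open>a < z\<close> by (intro mult_nonpos_nonpos right_neg sign_flip[OF \<open>f a * f b < 0\<close> sign_b]) auto
    qed simp
    then show ?thesis by (simp add: P_def algebra_simps)
  qed
qed

text \<open>Freezing \<open>f\<close>
  just left of \<open>Max Z\<close> removes that point from the zero set, which drives the induction.\<close>

lemma continuous_sign_matching_product:
  fixes f :: "real \<Rightarrow> real"
  assumes "continuous_on UNIV f" "finite Z" "\<And>x. f x = 0 \<Longrightarrow> x \<in> Z"
  shows "\<exists>\<sigma> rs. \<sigma> \<noteq> 0 \<and> length rs \<le> card Z \<and> (\<forall>x. 0 \<le> \<sigma> * f x * (\<Prod>r\<leftarrow>rs. x - r))"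
  using assms
proof (induction "card Z" arbitrary: f Z)
  case 0
  then have "\<And>x. f x \<noteq> 0" by auto
  then have "0 < f 0 * f x" for x
    using continuous_same_sign_if_no_zero_between[OF "0.prems"(1)] by blast
  then show ?case
    using \<open>f 0 \<noteq> 0\<close> by (intro exI[of _ "f 0"] exI[of _ "[]"]) (simp add: less_imp_le)
next
  case (Suc n Z f)
  define z where "z = Max Z"
  define Z' where "Z' = Z - {z}"
  have "Z \<noteq> {}" using Suc.hyps(2) by auto
  then have z: "z \<in> Z" "\<And>y. y \<in> Z \<Longrightarrow> y \<le> z"
    using Suc.prems(2) by (auto simp: z_def)
  have "n = card Z'" "finite Z'"
    using Suc.hyps(2) Suc.prems(2) z(1) by (simp_all add: Z'_def)
  define a where "a = (if Z' = {} then z - 1 else (Max Z' + z) / 2)"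
  have Z'_below: "y < a" and a_below_z: "a < z" if "y \<in> Z'" for y
  proof -
    have "Max Z' \<in> Z'" using that \<open>finite Z'\<close> by (auto intro: Max_in)
    then have max: "Max Z' < z" using z by (auto simp: Z'_def order.not_eq_order_implies_strict)
    have "y \<le> Max Z'" using \<open>finite Z'\<close> that by simp
    with max that show "y < a" "a < z" by (auto simp: a_def)
  qed
  have "a < z" using a_below_z by (cases "Z' = {}") (auto simp: a_def)
  have no_zero: "f t \<noteq> 0" if "a \<le> t" "t \<noteq> z" for t
  proof
    assume "f t = 0"
    then have "t \<in> Z'" using Suc.prems(3) that(2) by (simp add: Z'_def)
    with Z'_below[of t] that(1) show False by simp
  qed
  have "continuous_on UNIV (\<lambda>x. f (min x a))"
    by (rule continuous_on_compose2[OF Suc.prems(1) continuous_on_min]) auto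
  moreover have "f (min x a) = 0 \<Longrightarrow> x \<in> Z'" for x
    using no_zero[of "min x a"] Suc.prems(3)[of "min x a"] \<open>a < z\<close>
    by (cases "x \<le> a") (auto simp: Z'_def)
  ultimately obtain \<sigma> rs where \<sigma>: "\<sigma> \<noteq> 0" "length rs \<le> n"
      "\<And>x. 0 \<le> \<sigma> * f (min x a) * (\<Prod>r\<leftarrow>rs. x - r)"
    using Suc.hyps(1)[of Z' "\<lambda>x. f (min x a)"] \<open>n = card Z'\<close> \<open>finite Z'\<close> by blast
  from sign_matching_product_extend[OF Suc.prems(1) \<open>a < z\<close> no_zero \<sigma>(3)] show ?case
  proof
    assume "\<forall>x. 0 \<le> \<sigma> * f x * (\<Prod>r\<leftarrow>rs. x - r)"
    then show ?case using \<sigma> Suc.hyps(2) by (intro exI[of _ \<sigma>] exI[of _ rs]) simp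
  next
    assume "\<forall>x. 0 \<le> - \<sigma> * f x * (\<Prod>r\<leftarrow>z # rs. x - r)"
    then show ?case using \<sigma> Suc.hyps(2) by (intro exI[of _ "- \<sigma>"] exI[of _ "z # rs"]) simp
  qed
qed

lemma integrable_tendsto_at_top_imp_zero:
  fixes g :: "real \<Rightarrow> real"
  assumes ig: "integrable lborel g" and lim: "(g \<longlongrightarrow> L) at_top"
  shows "L = 0"
proof (rule ccontr)
  assume L: "L \<noteq> 0"
  then have "eventually (\<lambda>x. dist (g x) L < \<bar>L\<bar>/2) at_top"
    using lim by (intro tendstoD) auto
  then obtain B where B: "\<And>x. x \<ge> B \<Longrightarrow> dist (g x) L < \<bar>L\<bar>/2"
    by (auto simp: eventually_at_top_linorder)
  have large: "\<bar>L\<bar>/2 \<le> \<bar>g x\<bar>" if "x \<ge> B" for x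
  proof -
    have "\<bar>L\<bar> - \<bar>g x\<bar> \<le> \<bar>g x - L\<bar>"
      using abs_triangle_ineq2[of L "g x"] by (simp add: abs_minus_commute)
    with B[OF that] show ?thesis by (simp add: dist_real_def)
  qed
  have bound: "real n * (\<bar>L\<bar>/2) \<le> (\<integral>x. \<bar>g x\<bar> \<partial>lborel)" for n :: nat
  proof -
    have "real n * (\<bar>L\<bar>/2) = (\<integral>x. indicator {B..B + real n} x * (\<bar>L\<bar>/2) \<partial>lborel)"
      by simp
    also have "\<dots> \<le> (\<integral>x. \<bar>g x\<bar> \<partial>lborel)"
      using ig large by (intro integral_mono) (auto split: split_indicator)
    finally show ?thesis .
  qed
  obtain n :: nat where "(\<integral>x. \<bar>g x\<bar> \<partial>lborel) / (\<bar>L\<bar>/2) < real n"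
    using reals_Archimedean2 by blast
  with bound[of n] L show False
    by (simp add: field_simps)
qed

lemma integrable_tendsto_at_bot_imp_zero:
  fixes g :: "real \<Rightarrow> real"
  assumes "integrable lborel g" and "(g \<longlongrightarrow> L) at_bot"
  shows "L = 0"
proof -
  have "integrable lborel (\<lambda>x. g (- x))"
    using lborel_integrable_real_affine_iff[of "-1" g 0] assms(1) by simp
  moreover have "((\<lambda>x. g (- x)) \<longlongrightarrow> L) at_top"
    using assms(2) by (simp add: filterlim_at_bot_mirror)
  ultimately show ?thesis by (rule integrable_tendsto_at_top_imp_zero)
qed

lemma set_integral_deriv_eq:
  fixes g g' :: "real \<Rightarrow> real"
  assumes "\<And>x. (g has_real_derivative g' x) (at x)" "continuous_on UNIV g'" "a \<le> b"
  shows "set_lebesgue_integral lborel {a..b} g' = g b - g a"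
proof -
  have "(g has_vector_derivative g' x) (at x within {a..b})" for x
    using assms(1)[of x] by (simp add: has_real_derivative_iff_has_vector_derivative has_vector_derivative_at_within)
  moreover have "continuous_on {a..b} g'"
    using assms(2) by (rule continuous_on_subset) simp
  ultimately show ?thesis
    using integral_FTC_atLeastAtMost[OF assms(3), of g g'] by (simp add: set_lebesgue_integral_def)
qed

text \<open>Integration by parts on the whole line without boundary terms: the limits of \<open>g\<close> at
  \<open>\<plusminus>\<infinity>\<close> exist because \<open>g'\<close> is integrable, and they vanish because \<open>g\<close> is.\<close>

lemma integral_deriv_eq_zero:
  fixes g g' :: "real \<Rightarrow> real"
  assumes der: "\<And>x. (g has_real_derivative g' x) (at x)"
    and cont: "continuous_on UNIV g'"
    and ig: "integrable lborel g" and ig': "integrable lborel g'"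
  shows "integral\<^sup>L lborel g' = 0"
proof -
  note ftc = set_integral_deriv_eq[OF der cont]
  have si: "set_integrable lborel A g'" if "A \<in> sets lborel" for A
    unfolding set_integrable_def using integrable_mult_indicator[OF that ig'] .
  define I_top where "I_top = set_lebesgue_integral lborel {0..} g'"
  define I_bot where "I_bot = set_lebesgue_integral lborel {..0} g'"
  have "((\<lambda>b. g 0 + set_lebesgue_integral lborel {0..b} g') \<longlongrightarrow> g 0 + I_top) at_top"
    unfolding I_top_def by (intro tendsto_intros tendsto_set_lebesgue_integral_at_top) (auto intro: si)
  moreover have "eventually (\<lambda>b. g 0 + set_lebesgue_integral lborel {0..b} g' = g b) at_top"
    using eventually_ge_at_top[of 0] by eventually_elim (simp add: ftc)
  ultimately have "(g \<longlongrightarrow> g 0 + I_top) at_top" by (blast intro: Lim_transform_eventually)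
  then have top: "g 0 + I_top = 0" using integrable_tendsto_at_top_imp_zero[OF ig] by blast
  have "((\<lambda>a. g 0 - set_lebesgue_integral lborel {a..0} g') \<longlongrightarrow> g 0 - I_bot) at_bot"
    unfolding I_bot_def by (intro tendsto_intros tendsto_set_lebesgue_integral_at_bot) (auto intro: si)
  moreover have "eventually (\<lambda>a. g 0 - set_lebesgue_integral lborel {a..0} g' = g a) at_bot"
    using eventually_le_at_bot[of 0] by eventually_elim (simp add: ftc)
  ultimately have "(g \<longlongrightarrow> g 0 - I_bot) at_bot" by (blast intro: Lim_transform_eventually)
  then have bot: "g 0 - I_bot = 0" using integrable_tendsto_at_bot_imp_zero[OF ig] by blast
  have "integral\<^sup>L lborel g' = (\<integral>x. indicator {..0} x * g' x + indicator {0<..} x * g' x \<partial>lborel)"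
    by (intro arg_cong[where f="integral\<^sup>L lborel"] ext) (auto split: split_indicator)
  also have "\<dots> = I_bot + set_lebesgue_integral lborel {0<..} g'"
    using si[of "{..0}"] si[of "{0<..}"]
    by (simp add: I_bot_def set_lebesgue_integral_def set_integrable_def)
  also have "set_lebesgue_integral lborel {0<..} g' = I_top"
    unfolding I_top_def set_lebesgue_integral_def using AE_lborel_singleton[of 0] si
    by (intro integral_cong_AE) (auto split: split_indicator simp: set_integrable_def)
  finally show ?thesis using top bot by simp
qed

lemma abs_exp_minus_one_minus_le: "\<bar>exp u - 1 - u\<bar> \<le> u\<^sup>2 * exp \<bar>u\<bar>" for u :: real
proof -
  obtain t where t: "\<bar>t\<bar> \<le> \<bar>u\<bar>" "exp u = (\<Sum>m<2. u ^ m / fact m) + exp t / fact 2 * u ^ 2"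
    using Maclaurin_exp_le[of u 2] by blast
  then have "\<bar>exp u - 1 - u\<bar> = exp t / 2 * u\<^sup>2"
    by (simp add: numeral_2_eq_2)
  also have "\<dots> \<le> exp \<bar>u\<bar> * u\<^sup>2"
  proof (rule mult_right_mono)
    have "exp t \<le> exp \<bar>u\<bar>" using t(1) abs_ge_self[of t] by simp
    then show "exp t / 2 \<le> exp \<bar>u\<bar>" using exp_gt_zero[of t] by linarith
  qed simp
  finally show ?thesis by (simp add: mult.commute)
qed

lemma has_real_derivative_if_quadratic_bound:
  fixes F :: "real \<Rightarrow> real"
  assumes "\<And>h. \<bar>h\<bar> \<le> 1 \<Longrightarrow> \<bar>F (t + h) - F t - h * D\<bar> \<le> K * h\<^sup>2"
  shows "(F has_real_derivative D) (at t)"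
proof -
  have bound: "norm ((F (t + h) - F t) / h - D) \<le> K * \<bar>h\<bar>" if "\<bar>h\<bar> < 1" "h \<noteq> 0" for h
  proof -
    have "norm ((F (t + h) - F t) / h - D) = \<bar>F (t + h) - F t - h * D\<bar> / \<bar>h\<bar>"
      using that by (simp add: field_simps)
    also have "\<dots> \<le> K * (\<bar>h\<bar> * \<bar>h\<bar>) / \<bar>h\<bar>"
      using assms[of h] that by (simp add: divide_right_mono power2_eq_square)
    also have "\<dots> = K * \<bar>h\<bar>"
      using that by (simp add: field_simps del: abs_mult_self_eq)
    finally show ?thesis .
  qed
  have "((\<lambda>h. (F (t + h) - F t) / h - D) \<longlongrightarrow> 0) (at 0)"
  proof (rule Lim_null_comparison)
    show "((\<lambda>h. K * \<bar>h\<bar>) \<longlongrightarrow> 0) (at 0)"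
      by (intro tendsto_mult_right_zero tendsto_rabs_zero tendsto_ident_at)
    show "eventually (\<lambda>h. norm ((F (t + h) - F t) / h - D) \<le> K * \<bar>h\<bar>) (at 0)"
      unfolding eventually_at using bound by (intro exI[of _ 1]) (simp add: dist_real_def)
  qed
  then show ?thesis
    by (simp add: DERIV_def LIM_zero_iff)
qed

lemma integral_pos_if_nonneg_finite_zeros:
  fixes f :: "real \<Rightarrow> real"
  assumes "integrable lborel f" "\<And>x. 0 \<le> f x" "finite {x. f x = 0}"
  shows "0 < integral\<^sup>L lborel f"
proof -
  have "integral\<^sup>L lborel f \<noteq> 0"
  proof
    assume "integral\<^sup>L lborel f = 0"
    then have "AE x in lborel. x \<in> {x. f x = 0}"
      using integral_nonneg_eq_0_iff_AE[OF assms(1)] assms(2) by simp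
    moreover have "AE x in lborel. x \<notin> {x. f x = 0}"
      using assms(3) by (intro AE_not_in finite_imp_null_set_lborel)
    ultimately have "AE x in lborel. x \<in> {x. f x = 0} \<and> x \<notin> {x. f x = 0}"
      by (rule AE_conjI)
    then have "AE x::real in lborel. False"
      by simp
    then have "ae_filter (lborel :: real measure) = bot"
      by (simp add: eventually_False)
    then have "emeasure lborel (space lborel :: real set) = 0"
      by (simp add: ae_filter_eq_bot_iff)
    then show False by simp
  qed
  moreover have "0 \<le> integral\<^sup>L lborel f"
    using assms(2) by simp
  ultimately show ?thesis by simp
qed

lemma AE_lborel_exists_between:
  fixes u v :: real
  assumes "AE t in lborel. P t" "u < v"
  obtains t where "u < t" "t < v" "P t"
proof (rule ccontr)
  assume "\<not> thesis"
  with that have "{u<..<v} \<subseteq> {t. \<not> P t}" by auto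
  moreover obtain N where "{t \<in> space lborel. \<not> P t} \<subseteq> N" "emeasure lborel N = 0" "N \<in> sets lborel"
    using assms(1) by (rule AE_E)
  ultimately have "emeasure lborel {u<..<v} \<le> emeasure lborel N"
    by (intro emeasure_mono) auto
  moreover have "emeasure lborel {u<..<v} = ennreal (v - u)"
    using \<open>u < v\<close> by simp
  ultimately show False
    using \<open>emeasure lborel N = 0\<close> \<open>u < v\<close> by simp
qed

lemma integrable_poly_mult:
  fixes u F :: "'a \<Rightarrow> real"
  assumes "\<And>n. integrable M (\<lambda>z. u z ^ n * F z)"
  shows "integrable M (\<lambda>z. poly s (u z) * F z)"
proof -
  have "poly s (u z) * F z = (\<Sum>i\<le>degree s. coeff s i * (u z ^ i * F z))" for z
    unfolding poly_altdef sum_distrib_right by (simp add: mult.assoc)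
  then show ?thesis
    using assms by (simp add: Bochner_Integration.integrable_sum)
qed

text \<open>The bound \<open>exp (c t0 x) \<le> exp (c a x) + exp (c b x)\<close> for \<open>a < t0 < b\<close> lets integrability at
  almost every \<open>t\<close> propagate to every \<open>t0\<close>.\<close>

lemma integrable_exp_weight_if_AE:
  fixes \<phi> :: "real \<Rightarrow> real"
  assumes cont: "continuous_on UNIV \<phi>" and nonneg: "\<And>x. 0 \<le> \<phi> x"
    and AE: "AE t in lborel. integrable lborel (\<lambda>x. \<bar>x\<bar> ^ n * \<phi> x * exp (c * t * x))"
  shows "integrable lborel (\<lambda>x. \<bar>x\<bar> ^ n * \<phi> x * exp (c * t0 * x))"
proof -
  obtain a where a: "t0 - 1 < a" "a < t0" "integrable lborel (\<lambda>x. \<bar>x\<bar> ^ n * \<phi> x * exp (c * a * x))"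
    using AE_lborel_exists_between[OF AE, of "t0 - 1" t0] by auto
  obtain b where b: "t0 < b" "b < t0 + 1" "integrable lborel (\<lambda>x. \<bar>x\<bar> ^ n * \<phi> x * exp (c * b * x))"
    using AE_lborel_exists_between[OF AE, of t0 "t0 + 1"] by auto
  have exp_le: "exp (c * t0 * x) \<le> exp (c * a * x) + exp (c * b * x)" for x
  proof (cases "0 \<le> c * x")
    case True
    then have "c * t0 * x \<le> c * b * x"
      using mult_right_mono[of t0 b "c * x"] b(1) by (simp add: ac_simps)
    then show ?thesis using exp_gt_zero[of "c * a * x"] by (smt (verit) exp_le_cancel_iff)
  next
    case False
    then have "c * t0 * x \<le> c * a * x"
      using mult_right_mono_neg[of a t0 "c * x"] a(2) by (simp add: ac_simps)
    then show ?thesis using exp_gt_zero[of "c * b * x"] by (smt (verit) exp_le_cancel_iff)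
  qed
  show ?thesis
  proof (rule Bochner_Integration.integrable_bound[OF Bochner_Integration.integrable_add[OF a(3) b(3)]])
    show "(\<lambda>x. \<bar>x\<bar> ^ n * \<phi> x * exp (c * t0 * x)) \<in> borel_measurable lborel"
      unfolding measurable_lborel2 by (intro borel_measurable_continuous_onI continuous_intros cont)
    show "AE x in lborel. norm (\<bar>x\<bar> ^ n * \<phi> x * exp (c * t0 * x))
        \<le> norm (\<bar>x\<bar> ^ n * \<phi> x * exp (c * a * x) + \<bar>x\<bar> ^ n * \<phi> x * exp (c * b * x))"
      using nonneg mult_left_mono[OF exp_le, of "\<bar>_\<bar> ^ n * \<phi> _"]
      by (intro AE_I2) (simp add: distrib_left)
  qed
qed

lemma abs_exp_increment_le:
  fixes c t h y :: real
  assumes "\<bar>h\<bar> \<le> 1"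
  shows "\<bar>exp (c * (t + h) * y) - exp (c * t * y) - h * c * y * exp (c * t * y)\<bar>
    \<le> h\<^sup>2 * c\<^sup>2 * y\<^sup>2 * (exp (c * (t + 1) * y) + exp (c * (t - 1) * y))"
proof -
  have "exp (c * (t + h) * y) - exp (c * t * y) - h * c * y * exp (c * t * y)
      = exp (c * t * y) * (exp (c * h * y) - 1 - c * h * y)"
    by (simp add: algebra_simps flip: exp_add)
  then have "\<bar>exp (c * (t + h) * y) - exp (c * t * y) - h * c * y * exp (c * t * y)\<bar>
      = exp (c * t * y) * \<bar>exp (c * h * y) - 1 - c * h * y\<bar>"
    by (simp add: abs_mult)
  also have "\<dots> \<le> exp (c * t * y) * ((c * h * y)\<^sup>2 * exp \<bar>c * y\<bar>)"
  proof -
    have "\<bar>c * h * y\<bar> \<le> \<bar>c * y\<bar>"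
      using mult_left_mono[OF assms, of "\<bar>c\<bar> * \<bar>y\<bar>"] by (simp add: abs_mult ac_simps)
    then have "(c * h * y)\<^sup>2 * exp \<bar>c * h * y\<bar> \<le> (c * h * y)\<^sup>2 * exp \<bar>c * y\<bar>"
      by (intro mult_left_mono) auto
    then show ?thesis
      using abs_exp_minus_one_minus_le[of "c * h * y"] by (intro mult_left_mono) auto
  qed
  also have "\<dots> = h\<^sup>2 * c\<^sup>2 * y\<^sup>2 * (exp (c * t * y) * exp \<bar>c * y\<bar>)"
    by (simp add: power_mult_distrib)
  also have "exp (c * t * y) * exp \<bar>c * y\<bar> \<le> exp (c * (t + 1) * y) + exp (c * (t - 1) * y)"
    by (cases "0 \<le> c * y") (simp_all add: algebra_simps flip: exp_add)
  finally show ?thesis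
    by (simp add: mult_left_mono)
qed

locale laplace_weight =
  fixes \<phi> :: "real \<Rightarrow> real" and c :: real
  assumes continuous_\<phi>: "continuous_on UNIV \<phi>"
    and \<phi>_pos: "\<And>y. 0 < \<phi> y"
    and c_nonzero: "c \<noteq> 0"
    and integrable_abs_moments: "\<And>t n. integrable lborel (\<lambda>y. \<bar>y\<bar> ^ n * \<phi> y * exp (c * t * y))"
begin

definition laplace :: "real poly \<Rightarrow> real \<Rightarrow> real" where
  "laplace q t = (\<integral>y. poly q y * \<phi> y * exp (c * t * y) \<partial>lborel)"

lemma integrable_laplace: "integrable lborel (\<lambda>y. poly q y * \<phi> y * exp (c * t * y))"
proof -
  have "integrable lborel (\<lambda>y. y ^ n * (\<phi> y * exp (c * t * y)))" for n
  proof (rule Bochner_Integration.integrable_bound[OF integrable_abs_moments[of n t]])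
    show "(\<lambda>y. y ^ n * (\<phi> y * exp (c * t * y))) \<in> borel_measurable lborel"
      unfolding measurable_lborel2 by (intro borel_measurable_continuous_onI continuous_intros continuous_\<phi>)
    show "AE y in lborel. norm (y ^ n * (\<phi> y * exp (c * t * y))) \<le> norm (\<bar>y\<bar> ^ n * \<phi> y * exp (c * t * y))"
      using \<phi>_pos by (intro AE_I2) (simp add: abs_mult power_abs less_imp_le)
  qed
  from integrable_poly_mult[where M=lborel and u="\<lambda>y. y", OF this] show ?thesis
    by (simp add: mult.assoc)
qed

lemma laplace_diff: "laplace (p - q) t = laplace p t - laplace q t"
  unfolding laplace_def using integrable_laplace[of p t] integrable_laplace[of q t]
  by (simp add: left_diff_distrib)

lemma laplace_smult: "laplace (smult a q) t = a * laplace q t"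
  unfolding laplace_def by (simp add: mult.assoc)

lemma integrable_abs_y2_laplace: "integrable lborel (\<lambda>y. \<bar>poly q y\<bar> * y\<^sup>2 * \<phi> y * exp (c * s * y))"
proof -
  have "\<bar>poly (monom 1 2 * q) y * \<phi> y * exp (c * s * y)\<bar> = \<bar>poly q y\<bar> * y\<^sup>2 * \<phi> y * exp (c * s * y)" for y
    using \<phi>_pos[of y] by (simp add: abs_mult poly_monom abs_of_pos)
  then show ?thesis
    using integrable_abs[OF integrable_laplace[of "monom 1 2 * q" s]] by simp
qed

lemma has_real_derivative_laplace: "(laplace q has_real_derivative c * laplace (pCons 0 q) t) (at t)"
proof (rule has_real_derivative_if_quadratic_bound)
  define M where "M s y = \<bar>poly q y\<bar> * y\<^sup>2 * \<phi> y * exp (c * s * y)" for s y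
  have integrable_M: "integrable lborel (M s)" for s
    unfolding M_def by (rule integrable_abs_y2_laplace)
  fix h :: real assume h: "\<bar>h\<bar> \<le> 1"
  define F where "F p s y = poly p y * \<phi> y * exp (c * s * y)" for p s y
  have integrable_F: "integrable lborel (F p s)" for p s
    unfolding F_def by (rule integrable_laplace)
  define R where "R y = F q (t + h) y - F q t y - h * c * F (pCons 0 q) t y" for y
  have integrable_R: "integrable lborel R"
    unfolding R_def by (intro Bochner_Integration.integrable_diff integrable_mult_right integrable_F)
  have bound: "\<bar>R y\<bar> \<le> h\<^sup>2 * c\<^sup>2 * (M (t + 1) y + M (t - 1) y)" for y
  proof -
    have "R y = poly q y * \<phi> y *
        (exp (c * (t + h) * y) - exp (c * t * y) - h * c * y * exp (c * t * y))"
      by (simp add: R_def F_def algebra_simps)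
    then have "\<bar>R y\<bar> = \<bar>poly q y\<bar> * \<phi> y *
        \<bar>exp (c * (t + h) * y) - exp (c * t * y) - h * c * y * exp (c * t * y)\<bar>"
      using \<phi>_pos[of y] by (simp add: abs_mult)
    also have "\<dots> \<le> \<bar>poly q y\<bar> * \<phi> y *
        (h\<^sup>2 * c\<^sup>2 * y\<^sup>2 * (exp (c * (t + 1) * y) + exp (c * (t - 1) * y)))"
      using \<phi>_pos[of y] by (intro mult_left_mono abs_exp_increment_le h) simp
    also have "\<dots> = h\<^sup>2 * c\<^sup>2 * (M (t + 1) y + M (t - 1) y)"
      by (simp add: M_def algebra_simps)
    finally show ?thesis .
  qed
  have "laplace q (t + h) - laplace q t - h * (c * laplace (pCons 0 q) t) = integral\<^sup>L lborel R"
    unfolding R_def laplace_def F_def[symmetric] using integrable_F by simp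
  also have "\<bar>integral\<^sup>L lborel R\<bar> \<le> (\<integral>y. h\<^sup>2 * c\<^sup>2 * (M (t + 1) y + M (t - 1) y) \<partial>lborel)"
    using integrable_R bound integrable_M
    by (intro integral_abs_bound_integral) (auto intro!: integrable_mult_right Bochner_Integration.integrable_add)
  also have "\<dots> = c\<^sup>2 * (integral\<^sup>L lborel (M (t + 1)) + integral\<^sup>L lborel (M (t - 1))) * h\<^sup>2"
    using integrable_M by simp
  finally show "\<bar>laplace q (t + h) - laplace q t - h * (c * laplace (pCons 0 q) t)\<bar> \<le> \<dots>" .
qed

lemma laplace_pos:
  assumes "q \<noteq> 0" "\<And>y. 0 \<le> poly q y"
  shows "0 < laplace q t"
  unfolding laplace_def
proof (rule integral_pos_if_nonneg_finite_zeros[OF integrable_laplace])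
  show "0 \<le> poly q y * \<phi> y * exp (c * t * y)" for y
    using assms(2)[of y] \<phi>_pos[of y] by simp
  show "finite {y. poly q y * \<phi> y * exp (c * t * y) = 0}"
    using poly_roots_finite[OF assms(1)] \<phi>_pos by (simp add: less_imp_neq[symmetric])
qed

text \<open>Multiplying by \<open>exp (- c r t)\<close> and differentiating turns \<open>q\<close> into \<open>(y - r) q\<close>, which removes the
  sign change at \<open>r\<close>; Rolle's theorem then loses at most one zero per step.\<close>

lemma card_laplace_zeros_le_sign_changes:
  assumes "q \<noteq> 0" "\<And>y. 0 \<le> poly q y * (\<Prod>r\<leftarrow>rs. y - r)"
  shows "finite {t. laplace q t = 0} \<and> card {t. laplace q t = 0} \<le> length rs"
  using assms
proof (induction rs arbitrary: q)
  case Nil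
  then have "{t. laplace q t = 0} = {}"
    using laplace_pos[of q] by (auto simp: less_le)
  then show ?case by simp
next
  case (Cons r rs q)
  define q1 where "q1 = [:-r, 1:] * q"
  have "q1 \<noteq> 0" unfolding q1_def using Cons.prems(1) by (intro no_zero_divisors) auto
  moreover have "0 \<le> poly q1 y * (\<Prod>r\<leftarrow>rs. y - r)" for y
    using Cons.prems(2)[of y] by (simp add: q1_def algebra_simps)
  ultimately have IH: "finite {t. laplace q1 t = 0}" "card {t. laplace q1 t = 0} \<le> length rs"
    using Cons.IH by auto
  define H where "H t = exp (- c * r * t) * laplace q t" for t
  define H' where "H' t = c * exp (- c * r * t) * laplace q1 t" for t
  have "(H has_real_derivative H' t) (at t)" for t
  proof -
    have "q1 = pCons 0 q - smult r q"
      by (simp add: q1_def)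
    then have "laplace (pCons 0 q) t = laplace q1 t + r * laplace q t"
      by (simp add: laplace_diff laplace_smult)
    then show ?thesis
      unfolding H_def H'_def
      by (auto intro!: derivative_eq_intros has_real_derivative_laplace) (simp add: algebra_simps)
  qed
  moreover have "{t. H' t = 0} = {t. laplace q1 t = 0}"
    using c_nonzero by (auto simp: H'_def)
  moreover have "{t. H t = 0} = {t. laplace q t = 0}"
    by (simp add: H_def)
  ultimately show ?case
    using finite_card_zeros_le_Suc_card_deriv_zeros[of H H'] IH by auto
qed

lemma card_laplace_zeros_le_degree:
  assumes "q \<noteq> 0"
  shows "finite {t. laplace q t = 0}" "card {t. laplace q t = 0} \<le> degree q"
proof -
  obtain \<sigma> rs where \<sigma>: "\<sigma> \<noteq> 0" "length rs \<le> card {y. poly q y = 0}"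
      "\<And>y. 0 \<le> \<sigma> * poly q y * (\<Prod>r\<leftarrow>rs. y - r)"
    using continuous_sign_matching_product[OF continuous_on_poly[OF continuous_on_id, where p=q]
        poly_roots_finite[OF assms]] by auto
  have "{t. laplace (smult \<sigma> q) t = 0} = {t. laplace q t = 0}"
    using \<sigma>(1) by (simp add: laplace_smult)
  moreover have "finite {t. laplace (smult \<sigma> q) t = 0} \<and> card {t. laplace (smult \<sigma> q) t = 0} \<le> length rs"
    using assms \<sigma> by (intro card_laplace_zeros_le_sign_changes) auto
  moreover have "length rs \<le> degree q"
    using \<sigma>(2) card_poly_roots_bound[OF assms] by linarith
  ultimately show "finite {t. laplace q t = 0}" "card {t. laplace q t = 0} \<le> degree q"
    by auto
qed

end

lemma less_div_3_iff: "j < 3 \<Longrightarrow> i < (k + 2 - j) div 3 \<longleftrightarrow> 3 * i + j < k" for i j k :: nat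
  by (simp add: less_eq_div_iff_mult_less_eq Suc_le_eq[symmetric] del: Suc_le_eq) linarith

lemma degree_minus_smult_lead_coeff:
  fixes r t :: "'a::field poly"
  assumes "degree t = degree r" "t \<noteq> 0"
  shows "degree (r - smult (lead_coeff r / lead_coeff t) t) < degree r \<or> r - smult (lead_coeff r / lead_coeff t) t = 0"
proof -
  have "coeff t (degree r) \<noteq> 0"
    using assms by (metis leading_coeff_0_iff)
  then have "coeff (r - smult (lead_coeff r / lead_coeff t) t) (degree r) = 0"
    using assms(1) by simp
  moreover have "degree (r - smult (lead_coeff r / lead_coeff t) t) \<le> degree r"
    using assms(1) by (intro degree_diff_le) (auto simp: degree_smult_le)
  ultimately show ?thesis
    by (metis le_neq_implies_less leading_coeff_0_iff)
qed

lemma monic_monom_minus_lower: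
  fixes p :: "'a::comm_ring_1 poly"
  assumes "\<forall>i\<ge>k. coeff p i = 0"
  shows "lead_coeff (monom 1 k - p) = 1" "degree (monom 1 k - p) = k"
proof -
  have "coeff (monom 1 k - p) k = 1" "\<forall>i>k. coeff (monom 1 k - p) i = 0"
    using assms by (auto simp: coeff_monom)
  moreover from this have "degree (monom 1 k - p) = k"
    by (metis degree_le le_degree order_antisym one_neq_zero)
  ultimately show "lead_coeff (monom 1 k - p) = 1" "degree (monom 1 k - p) = k"
    by simp_all
qed

locale biorthogonal_weight =
  fixes V :: "real \<Rightarrow> real" and W :: "real poly" and \<tau> :: real
  assumes continuous_V: "continuous_on UNIV V"
    and degree_W: "degree W = 4" and lead_coeff_W: "lead_coeff W > 0"
    and \<tau>_nonzero: "\<tau> \<noteq> 0"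
    and integrable_joint_moments: "\<forall>a b :: nat. integrable (lborel \<Otimes>\<^sub>M lborel)
           (\<lambda>z. \<bar>fst z\<bar> ^ a * \<bar>snd z\<bar> ^ b * jweight V W \<tau> (fst z) (snd z))"
begin

abbreviation J :: "real \<Rightarrow> real \<Rightarrow> real" where
  "J \<equiv> jweight V W \<tau>"

lemma J_pos: "0 < J x y"
  by (simp add: jweight_def)

lemma J_eq: "J x y = exp (- poly W y) * (exp (- V x) * exp (2 * \<tau> * y * x))"
  unfolding jweight_def by (simp add: algebra_simps flip: exp_add)

lemma integrable_abs_x_moments: "integrable lborel (\<lambda>x. \<bar>x\<bar> ^ n * exp (- V x) * exp (2 * \<tau> * t * x))"
proof (rule integrable_exp_weight_if_AE)
  show "continuous_on UNIV (\<lambda>x. exp (- V x))"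
    by (intro continuous_intros continuous_V)
  have "integrable (lborel \<Otimes>\<^sub>M lborel) (case_prod (\<lambda>x y. \<bar>x\<bar> ^ n * J x y))"
    using integrable_joint_moments[rule_format, of n 0] by (simp add: case_prod_beta')
  from lborel_pair.AE_integrable_snd[OF this]
  show "AE y in lborel. integrable lborel (\<lambda>x. \<bar>x\<bar> ^ n * exp (- V x) * exp (2 * \<tau> * y * x))"
  proof eventually_elim
    case (elim y)
    have "(\<lambda>x. \<bar>x\<bar> ^ n * J x y)
        = (\<lambda>x. exp (- poly W y) * (\<bar>x\<bar> ^ n * exp (- V x) * exp (2 * \<tau> * y * x)))"
      by (simp add: J_eq fun_eq_iff)
    with elim show ?case
      by (simp add: integrable_mult_left_iff)
  qed
qed simp

sublocale Lx: laplace_weight "\<lambda>x. exp (- V x)" "2 * \<tau>"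
  by unfold_locales (auto intro!: continuous_intros continuous_V integrable_abs_x_moments simp: \<tau>_nonzero)

lemma integrable_monomials:
  "integrable (lborel \<Otimes>\<^sub>M lborel) (\<lambda>z. fst z ^ a * snd z ^ b * J (fst z) (snd z))"
proof (rule Bochner_Integration.integrable_bound[OF integrable_joint_moments[rule_format, of a b]])
  have "continuous_on UNIV (\<lambda>z::real \<times> real. fst z ^ a * snd z ^ b * J (fst z) (snd z))"
    unfolding jweight_def
    by (intro continuous_intros continuous_on_compose2[OF continuous_V]) auto
  then show "(\<lambda>z. fst z ^ a * snd z ^ b * J (fst z) (snd z)) \<in> borel_measurable (lborel \<Otimes>\<^sub>M lborel)"
    unfolding lborel_prod measurable_lborel2 by (rule borel_measurable_continuous_onI)
  show "AE z in lborel \<Otimes>\<^sub>M lborel. norm (fst z ^ a * snd z ^ b * J (fst z) (snd z))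
          \<le> norm (\<bar>fst z\<bar> ^ a * \<bar>snd z\<bar> ^ b * J (fst z) (snd z))"
    using J_pos by (intro AE_I2) (simp add: abs_mult power_abs)
qed

lemma integrable_pairing:
  "integrable (lborel \<Otimes>\<^sub>M lborel) (\<lambda>z. poly p (fst z) * poly q (snd z) * J (fst z) (snd z))"
proof -
  have "integrable (lborel \<Otimes>\<^sub>M lborel) (\<lambda>z. poly q (snd z) * (fst z ^ a * J (fst z) (snd z)))" for a
    using integrable_monomials[of a]
    by (intro integrable_poly_mult[where u=snd]) (simp add: ac_simps)
  then have "integrable (lborel \<Otimes>\<^sub>M lborel) (\<lambda>z. poly p (fst z) * (poly q (snd z) * J (fst z) (snd z)))"
    by (intro integrable_poly_mult[where u=fst]) (simp add: ac_simps)
  then show ?thesis by (simp add: ac_simps)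
qed

definition pairing :: "real poly \<Rightarrow> real poly \<Rightarrow> real" where
  "pairing p q = (\<integral>z. poly p (fst z) * poly q (snd z) * J (fst z) (snd z) \<partial>(lborel \<Otimes>\<^sub>M lborel))"

lemma biorth_iff_pairing: "biorth V W \<tau> k p \<longleftrightarrow> (\<forall>q. degree q < k \<longrightarrow> pairing p q = 0)"
  unfolding biorth_def pairing_def ..

lemma pairing_add_left: "pairing (p1 + p2) q = pairing p1 q + pairing p2 q"
  unfolding pairing_def using integrable_pairing[of p1 q] integrable_pairing[of p2 q]
  by (simp add: distrib_right)

lemma pairing_diff_left: "pairing (p1 - p2) q = pairing p1 q - pairing p2 q"
  unfolding pairing_def using integrable_pairing[of p1 q] integrable_pairing[of p2 q]
  by (simp add: left_diff_distrib)

lemma pairing_smult_left: "pairing (smult a p) q = a * pairing p q"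
  unfolding pairing_def by (simp add: mult.assoc)

lemma pairing_add_right: "pairing p (q1 + q2) = pairing p q1 + pairing p q2"
  unfolding pairing_def using integrable_pairing[of p q1] integrable_pairing[of p q2]
  by (simp add: distrib_left distrib_right)

lemma pairing_smult_right: "pairing p (smult a q) = a * pairing p q"
  unfolding pairing_def by (simp add: ac_simps flip: Bochner_Integration.integral_mult_right_zero)

lemma pairing_eq_sum_monom_right: "pairing p q = (\<Sum>m\<le>degree q. coeff q m * pairing p (monom 1 m))"
proof -
  have "poly p (fst z) * poly q (snd z) * J (fst z) (snd z) =
      (\<Sum>m\<le>degree q. coeff q m * (poly p (fst z) * poly (monom 1 m) (snd z) * J (fst z) (snd z)))" for z
    unfolding poly_altdef[of q] sum_distrib_left sum_distrib_right by (simp add: poly_monom ac_simps)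
  then show ?thesis
    unfolding pairing_def using integrable_pairing by simp
qed

lemma pairing_eq_0_if_monoms:
  assumes "\<And>m. m < k \<Longrightarrow> pairing f (monom 1 m) = 0" "degree q < k"
  shows "pairing f q = 0"
  using assms by (subst pairing_eq_sum_monom_right) (auto intro!: sum.neutral)

lemma pairing_iterated_x: "pairing p q = (\<integral>x. poly p x * (\<integral>y. poly q y * J x y \<partial>lborel) \<partial>lborel)"
  using lborel_pair.integral_fst'[OF integrable_pairing[of p q]]
  unfolding pairing_def by (simp add: mult.assoc)

lemma integrable_iterated_x: "integrable lborel (\<lambda>x. poly p x * (\<integral>y. poly q y * J x y \<partial>lborel))"
  using lborel_pair.integrable_fst'[OF integrable_pairing[of p q]] by (simp add: mult.assoc)

lemma integral_wj_eq_pairing: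
  "(\<integral>x. poly f x * x ^ i * wj V W \<tau> j x \<partial>lborel) = pairing (monom 1 i * f) (monom 1 j)"
  unfolding pairing_iterated_x wj_def by (simp add: poly_monom ac_simps)

lemma AE_integrable_y_moments: "AE x in lborel. \<forall>n. integrable lborel (\<lambda>y. y ^ n * J x y)"
proof -
  have "AE x in lborel. integrable lborel (\<lambda>y. y ^ n * J x y)" for n
    using lborel_pair.AE_integrable_fst'[OF integrable_monomials[of 0 n]] by simp
  then show ?thesis by (simp add: AE_all_countable)
qed

text \<open>Integration by parts in \<open>y\<close>: \<open>\<partial>\<^sub>y J = (2 \<tau> x - W') J\<close>, so multiplication by \<open>x\<close> under the
  pairing becomes a first order differential operator acting on the second argument.\<close>

lemma integral_y_by_parts:
  assumes "\<forall>n. integrable lborel (\<lambda>y. y ^ n * J x y)"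
  shows "(\<integral>y. poly (pderiv W * r - pderiv r) y * J x y \<partial>lborel)
    = 2 * \<tau> * x * (\<integral>y. poly r y * J x y \<partial>lborel)"
proof -
  have integrable: "integrable lborel (\<lambda>y. poly s y * J x y)" for s
    using assms by (intro integrable_poly_mult[where u="\<lambda>y. y"]) auto
  define s where "s = pderiv W * r - pderiv r"
  define g' where "g' y = 2 * \<tau> * x * (poly r y * J x y) - poly s y * J x y" for y
  have "((\<lambda>y. poly r y * J x y) has_real_derivative g' y) (at y)" for y
    unfolding g'_def s_def jweight_def
    by (auto intro!: derivative_eq_intros poly_DERIV simp: algebra_simps)
  moreover have "continuous_on UNIV g'"
    unfolding g'_def jweight_def by (intro continuous_intros)
  moreover have "integrable lborel g'"
    unfolding g'_def using integrable by (intro Bochner_Integration.integrable_diff integrable_mult_right)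
  ultimately have "integral\<^sup>L lborel g' = 0"
    using integral_deriv_eq_zero integrable by blast
  then show ?thesis
    unfolding g'_def s_def[symmetric] using integrable by simp
qed

definition x_adjoint :: "real poly \<Rightarrow> real poly" where
  "x_adjoint r = smult (1 / (2 * \<tau>)) (pderiv W * r - pderiv r)"

lemma pairing_pCons_0_left: "pairing (pCons 0 p) r = pairing p (x_adjoint r)"
proof -
  have "pairing p (x_adjoint r) = (\<integral>x. poly p x * (\<integral>y. poly (x_adjoint r) y * J x y \<partial>lborel) \<partial>lborel)"
    by (rule pairing_iterated_x)
  also have "\<dots> = (\<integral>x. poly (pCons 0 p) x * (\<integral>y. poly r y * J x y \<partial>lborel) \<partial>lborel)"
  proof (rule integral_cong_AE)
    show "AE x in lborel. poly p x * (\<integral>y. poly (x_adjoint r) y * J x y \<partial>lborel)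
        = poly (pCons 0 p) x * (\<integral>y. poly r y * J x y \<partial>lborel)"
      using AE_integrable_y_moments
    proof eventually_elim
      case (elim x)
      have "(\<integral>y. poly (x_adjoint r) y * J x y \<partial>lborel)
          = 1 / (2 * \<tau>) * (\<integral>y. poly (pderiv W * r - pderiv r) y * J x y \<partial>lborel)"
        by (simp add: x_adjoint_def mult.assoc)
      also have "\<dots> = x * (\<integral>y. poly r y * J x y \<partial>lborel)"
        using integral_y_by_parts[OF elim] \<tau>_nonzero by simp
      finally show ?case by simp
    qed
  qed (intro borel_measurable_integrable integrable_iterated_x)+
  also have "\<dots> = pairing (pCons 0 p) r"
    by (rule pairing_iterated_x[symmetric])
  finally show ?thesis ..
qed

lemma pairing_monom_mult_left: "pairing (monom 1 i * p) r = pairing p ((x_adjoint ^^ i) r)"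
proof (induction i arbitrary: r)
  case 0
  then show ?case by (simp add: monom_0 one_pCons[symmetric])
next
  case (Suc i)
  have "pairing (monom 1 (Suc i) * p) r = pairing (monom 1 i * p) (x_adjoint r)"
    by (simp add: monom_Suc pairing_pCons_0_left)
  also have "\<dots> = pairing p ((x_adjoint ^^ Suc i) r)"
    by (simp add: Suc.IH funpow_Suc_right del: funpow.simps)
  finally show ?case .
qed

lemma degree_x_adjoint_le: "degree (x_adjoint r) \<le> degree r + 3"
proof -
  have "degree (pderiv W * r) \<le> degree r + 3"
    using degree_mult_le[of "pderiv W" r] degree_W by (simp add: degree_pderiv)
  then have "degree (pderiv W * r - pderiv r) \<le> degree r + 3"
    by (intro degree_diff_le) (auto simp: degree_pderiv)
  then show ?thesis
    unfolding x_adjoint_def using degree_smult_le order_trans by blast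
qed

lemma degree_x_adjoint_monom: "degree (x_adjoint (monom 1 d)) = d + 3"
proof (rule antisym)
  show "degree (x_adjoint (monom 1 d)) \<le> d + 3"
    using degree_x_adjoint_le[of "monom 1 d"] by (simp add: degree_monom_eq)
  have "coeff (x_adjoint (monom 1 d)) (d + 3) = 2 * lead_coeff W / \<tau>"
    by (simp add: x_adjoint_def mult.commute[of _ "monom 1 d"] coeff_monom_mult coeff_pderiv coeff_monom degree_W)
  then show "d + 3 \<le> degree (x_adjoint (monom 1 d))"
    using lead_coeff_W \<tau>_nonzero by (intro le_degree) (auto simp del: leading_coeff_0_iff)
qed

lemma degree_funpow_x_adjoint_le: "degree ((x_adjoint ^^ i) r) \<le> degree r + 3 * i"
  by (induction i) (auto intro: order_trans[OF degree_x_adjoint_le])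

text \<open>Since \<open>x_adjoint\<close> raises the degree by exactly three, the polynomials
  \<open>x_adjoint\<^sup>i (y\<^sup>j)\<close> with \<open>j < 3\<close> and \<open>3 i + j < k\<close> span all polynomials of degree below \<open>k\<close>.\<close>

lemma pairing_eq_0_if_moment_conditions:
  assumes moments: "\<forall>j<3. \<forall>i. 3 * i + j < k \<longrightarrow> pairing (monom 1 i * f) (monom 1 j) = 0"
  shows "3 * i + degree r < k \<Longrightarrow> pairing (monom 1 i * f) r = 0"
proof (induction "degree r" arbitrary: i r rule: less_induct)
  case less
  define d where "d = degree r"
  define t where "t = (if d < 3 then monom 1 d else x_adjoint (monom 1 (d - 3)))"
  have "degree t = d"
    by (simp add: t_def degree_monom_eq degree_x_adjoint_monom)
  have "t \<noteq> 0"
    using \<open>degree t = d\<close> by (cases "d < 3") (auto simp: t_def)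
  have "pairing (monom 1 i * f) t = 0"
  proof (cases "d < 3")
    case True
    then show ?thesis
      using moments less.prems by (simp add: t_def d_def)
  next
    case False
    have "pairing (monom 1 i * f) t = pairing (monom 1 (Suc i) * f) (monom 1 (d - 3))"
      using False by (simp add: t_def monom_Suc pairing_pCons_0_left)
    also have "\<dots> = 0"
      using False less.prems by (intro less.hyps) (auto simp: d_def degree_monom_eq)
    finally show ?thesis .
  qed
  define r' where "r' = r - smult (lead_coeff r / lead_coeff t) t"
  have "degree r' < d \<or> r' = 0"
    using degree_minus_smult_lead_coeff[OF _ \<open>t \<noteq> 0\<close>] \<open>degree t = d\<close> by (auto simp: r'_def d_def)
  then have "pairing (monom 1 i * f) r' = 0"
  proof
    assume "degree r' < d"
    then show ?thesis using less.hyps[of r' i] less.prems by (simp add: d_def)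
  next
    assume "r' = 0"
    then show ?thesis by (simp add: pairing_def)
  qed
  moreover have "r = r' + smult (lead_coeff r / lead_coeff t) t"
    by (simp add: r'_def)
  ultimately show ?case
    using \<open>pairing (monom 1 i * f) t = 0\<close> by (metis pairing_add_right pairing_smult_right mult_zero_right add_0)
qed

lemma moment_conditions_iff_orthogonal:
  "(\<forall>j<3. \<forall>i. 3 * i + j < k \<longrightarrow> pairing (monom 1 i * f) (monom 1 j) = 0)
    \<longleftrightarrow> (\<forall>q. degree q < k \<longrightarrow> pairing f q = 0)"
proof
  assume "\<forall>j<3. \<forall>i. 3 * i + j < k \<longrightarrow> pairing (monom 1 i * f) (monom 1 j) = 0"
  from pairing_eq_0_if_moment_conditions[OF this, of 0] show "\<forall>q. degree q < k \<longrightarrow> pairing f q = 0"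
    by (simp add: monom_0 one_pCons[symmetric])
next
  assume orth: "\<forall>q. degree q < k \<longrightarrow> pairing f q = 0"
  show "\<forall>j<3. \<forall>i. 3 * i + j < k \<longrightarrow> pairing (monom 1 i * f) (monom 1 j) = 0"
  proof (intro allI impI)
    fix i j assume "3 * i + j < k"
    then have "degree ((x_adjoint ^^ i) (monom 1 j)) < k"
      using degree_funpow_x_adjoint_le[of i "monom 1 j"] by (simp add: degree_monom_eq)
    then show "pairing (monom 1 i * f) (monom 1 j) = 0"
      using orth by (simp add: pairing_monom_mult_left)
  qed
qed

lemma pairing_via_laplace:
  "pairing p s = (\<integral>y. poly s y * exp (- poly W y) * Lx.laplace p y \<partial>lborel)"
  and integrable_via_laplace:
  "integrable lborel (\<lambda>y. poly s y * exp (- poly W y) * Lx.laplace p y)"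
proof -
  have inner: "(\<integral>x. poly p x * poly s y * J x y \<partial>lborel) = poly s y * exp (- poly W y) * Lx.laplace p y" for y
    unfolding Lx.laplace_def J_eq by (simp add: ac_simps flip: Bochner_Integration.integral_mult_right_zero)
  have "integrable (lborel \<Otimes>\<^sub>M lborel) (case_prod (\<lambda>x y. poly p x * poly s y * J x y))"
    using integrable_pairing[of p s] by (simp add: case_prod_beta')
  from lborel_pair.integral_snd[OF this] lborel_pair.integrable_snd[OF this]
  show "pairing p s = (\<integral>y. poly s y * exp (- poly W y) * Lx.laplace p y \<partial>lborel)"
    "integrable lborel (\<lambda>y. poly s y * exp (- poly W y) * Lx.laplace p y)"
    unfolding pairing_def inner by (simp_all add: case_prod_beta')
qed

lemma pairing_nondegenerate:
  assumes "p \<noteq> 0"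
  obtains s where "degree s \<le> degree p" "pairing p s \<noteq> 0"
proof -
  note zeros = Lx.card_laplace_zeros_le_degree[OF assms]
  have "continuous_on UNIV (Lx.laplace p)"
    using Lx.has_real_derivative_laplace by (meson DERIV_isCont continuous_at_imp_continuous_on)
  then obtain \<sigma> rs where \<sigma>: "\<sigma> \<noteq> 0" "length rs \<le> card {t. Lx.laplace p t = 0}"
      "\<And>y. 0 \<le> \<sigma> * Lx.laplace p y * (\<Prod>r\<leftarrow>rs. y - r)"
    using continuous_sign_matching_product[OF _ zeros(1)] by blast
  define s where "s = smult \<sigma> (\<Prod>r\<leftarrow>rs. [:-r, 1:])"
  have poly_s: "poly s y = \<sigma> * (\<Prod>r\<leftarrow>rs. y - r)" for y
  proof -
    have "poly (\<Prod>r\<leftarrow>rs. [:-r, 1:]) y = (\<Prod>r\<leftarrow>rs. y - r)"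
      by (induction rs) (simp_all add: algebra_simps)
    then show ?thesis by (simp add: s_def)
  qed
  have "degree (\<Prod>r\<leftarrow>rs. [:-r, 1:]) \<le> length rs"
  proof (induction rs)
    case (Cons r rs)
    have "degree ([:-r, 1:] * (\<Prod>r\<leftarrow>rs. [:-r, 1:])) \<le> degree [:-r, 1:] + degree (\<Prod>r\<leftarrow>rs. [:-r, 1:])"
      by (rule degree_mult_le)
    with Cons.IH show ?case by simp
  qed simp
  then have "degree s \<le> degree p"
    using \<sigma>(2) zeros(2) by (simp add: s_def)
  moreover have "0 < pairing p s"
    unfolding pairing_via_laplace
  proof (rule integral_pos_if_nonneg_finite_zeros[OF integrable_via_laplace])
    show "0 \<le> poly s y * exp (- poly W y) * Lx.laplace p y" for y
      using mult_nonneg_nonneg[OF exp_ge_zero[of "- poly W y"] \<sigma>(3)[of y]] by (simp add: poly_s ac_simps)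
    have "{y. poly s y * exp (- poly W y) * Lx.laplace p y = 0} \<subseteq> set rs \<union> {t. Lx.laplace p t = 0}"
      using \<sigma>(1) by (auto simp: poly_s prod_list_zero_iff)
    then show "finite {y. poly s y * exp (- poly W y) * Lx.laplace p y = 0}"
      using zeros(1) finite_subset by blast
  qed
  ultimately show ?thesis
    using that by simp
qed

lemma exists_monic_orthogonal_if_moments_solvable:
  assumes "\<And>b. \<exists>p. (\<forall>i\<ge>k. coeff p i = 0) \<and> (\<forall>m<k. pairing p (monom 1 m) = b m)"
  shows "\<exists>f. lead_coeff f = 1 \<and> degree f = k \<and> (\<forall>q. degree q < k \<longrightarrow> pairing f q = 0)"
proof -
  have "\<exists>p. (\<forall>i\<ge>k. coeff p i = 0) \<and> (\<forall>m<k. pairing p (monom 1 m) = pairing (monom 1 k) (monom 1 m))"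
    by (rule assms)
  then obtain p where p: "\<forall>i\<ge>k. coeff p i = 0" "\<forall>m<k. pairing p (monom 1 m) = pairing (monom 1 k) (monom 1 m)"
    by (elim exE conjE)
  have orth: "pairing (monom 1 k - p) (monom 1 m) = 0" if "m < k" for m
    using p(2) that by (simp add: pairing_diff_left)
  show ?thesis
  proof (intro exI conjI allI impI)
    show "lead_coeff (monom 1 k - p) = 1" "degree (monom 1 k - p) = k"
      by (rule monic_monom_minus_lower[OF p(1)])+
    show "pairing (monom 1 k - p) q = 0" if "degree q < k" for q
      using pairing_eq_0_if_monoms[OF orth that] .
  qed
qed

lemma pairing_monom_nonzero_if_orthogonal:
  assumes "lead_coeff f = 1" "degree f = k" "\<forall>q. degree q < k \<longrightarrow> pairing f q = 0"
  shows "pairing f (monom 1 k) \<noteq> 0"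
proof
  assume "pairing f (monom 1 k) = 0"
  then have monoms: "pairing f (monom 1 m) = 0" if "m < Suc k" for m
    using assms(3)[rule_format, of "monom 1 m"] that by (cases "m = k") (simp_all add: degree_monom_eq)
  have "f \<noteq> 0" using assms(1) by auto
  then obtain s where "degree s \<le> k" "pairing f s \<noteq> 0"
    using pairing_nondegenerate assms(2) by metis
  with monoms show False
    using pairing_eq_0_if_monoms[of "Suc k" f s] by simp
qed

lemma moments_solvable: "\<exists>p. (\<forall>i\<ge>k. coeff p i = 0) \<and> (\<forall>m<k. pairing p (monom 1 m) = b m)"
proof (induction k arbitrary: b)
  case 0
  show ?case by (intro exI[of _ 0]) simp
next
  case (Suc k)
  from exists_monic_orthogonal_if_moments_solvable[OF Suc.IH]
  obtain f where f: "lead_coeff f = 1" "degree f = k" "\<forall>q. degree q < k \<longrightarrow> pairing f q = 0"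
    by (elim exE conjE)
  have "pairing f (monom 1 k) \<noteq> 0"
    using pairing_monom_nonzero_if_orthogonal f by blast
  obtain p1 where p1: "\<forall>i\<ge>k. coeff p1 i = 0" "\<forall>m<k. pairing p1 (monom 1 m) = b m"
    using Suc.IH by blast
  define p where "p = p1 + smult ((b k - pairing p1 (monom 1 k)) / pairing f (monom 1 k)) f"
  have "\<forall>i\<ge>Suc k. coeff p i = 0"
    using p1(1) f(2) by (simp add: p_def coeff_eq_0)
  moreover have "pairing p (monom 1 m) = b m" if "m < Suc k" for m
  proof (cases "m = k")
    case True
    then show ?thesis
      using \<open>pairing f (monom 1 k) \<noteq> 0\<close> by (simp add: p_def pairing_add_left pairing_smult_left)
  next
    case False
    with that have "m < k" by simp
    then show ?thesis
      using p1(2) f(3)[rule_format, of "monom 1 m"] by (simp add: p_def pairing_add_left pairing_smult_left degree_monom_eq)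
  qed
  ultimately show ?case by blast
qed

lemma exists_monic_biorth: "\<exists>f. lead_coeff f = 1 \<and> degree f = k \<and> biorth V W \<tau> k f"
  using exists_monic_orthogonal_if_moments_solvable[OF moments_solvable] unfolding biorth_iff_pairing .

lemma monic_biorth_unique:
  assumes "lead_coeff f = 1" "degree f = k" "biorth V W \<tau> k f"
    and "lead_coeff g = 1" "degree g = k" "biorth V W \<tau> k g"
  shows "f = g"
proof (rule ccontr)
  assume "f \<noteq> g"
  then have "f - g \<noteq> 0" by simp
  moreover have "degree (f - g) < k"
  proof -
    have "degree (f - g) \<le> k" "coeff (f - g) k = 0"
      using assms by (auto intro: degree_diff_le)
    with \<open>f - g \<noteq> 0\<close> show ?thesis
      by (metis le_neq_implies_less leading_coeff_0_iff)
  qed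
  obtain s where "degree s \<le> degree (f - g)" "pairing (f - g) s \<noteq> 0"
    using pairing_nondegenerate[OF \<open>f - g \<noteq> 0\<close>] by blast
  with \<open>degree (f - g) < k\<close> assms(3,6) show False
    by (simp add: biorth_iff_pairing pairing_diff_left)
qed

lemma bop_eqI:
  assumes "lead_coeff f = 1" "degree f = k" "biorth V W \<tau> k f"
  shows "bop V W \<tau> k = f"
  unfolding bop_def
proof (rule the_equality)
  show "lead_coeff f = 1 \<and> degree f = k \<and> biorth V W \<tau> k f"
    using assms by simp
  show "g = f" if "lead_coeff g = 1 \<and> degree g = k \<and> biorth V W \<tau> k g" for g
    using monic_biorth_unique[OF _ _ _ assms] that by blast
qed

lemma bop_monic_biorth:
  "lead_coeff (bop V W \<tau> k) = 1" "degree (bop V W \<tau> k) = k" "biorth V W \<tau> k (bop V W \<tau> k)"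
proof -
  obtain f where "lead_coeff f = 1" "degree f = k" "biorth V W \<tau> k f"
    using exists_monic_biorth by blast
  with bop_eqI show "lead_coeff (bop V W \<tau> k) = 1" "degree (bop V W \<tau> k) = k"
    "biorth V W \<tau> k (bop V W \<tau> k)"
    by simp_all
qed

end

theorem lemma2p1:
  fixes V :: "real \<Rightarrow> real" and W :: "real poly" and \<tau> :: real and k :: nat
  assumes "continuous_on UNIV V"
    and "degree W = 4" and "lead_coeff W > 0"
    and "\<tau> \<noteq> 0"
    and "\<forall>a b :: nat. integrable (lborel \<Otimes>\<^sub>M lborel)
           (\<lambda>z. \<bar>fst z\<bar> ^ a * \<bar>snd z\<bar> ^ b * jweight V W \<tau> (fst z) (snd z))"
  shows "(\<forall>j<3. \<forall>i < (k + 2 - j) div 3.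
            (\<integral>x. poly (bop V W \<tau> k) x * x ^ i * wj V W \<tau> j x \<partial>lborel) = 0)
       \<and> (\<forall>f :: real poly. lead_coeff f = 1 \<and> degree f = k \<and>
            (\<forall>j<3. \<forall>i < (k + 2 - j) div 3.
               (\<integral>x. poly f x * x ^ i * wj V W \<tau> j x \<partial>lborel) = 0)
            \<longrightarrow> f = bop V W \<tau> k)"
proof -
  interpret biorthogonal_weight V W \<tau>
    using assms by unfold_locales
  have conditions_iff_biorth:
    "(\<forall>j<3. \<forall>i < (k + 2 - j) div 3. (\<integral>x. poly f x * x ^ i * wj V W \<tau> j x \<partial>lborel) = 0)
      \<longleftrightarrow> biorth V W \<tau> k f" for f
  proof -
    have "(\<forall>j<3. \<forall>i < (k + 2 - j) div 3. (\<integral>x. poly f x * x ^ i * wj V W \<tau> j x \<partial>lborel) = 0)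
        \<longleftrightarrow> (\<forall>j<3. \<forall>i. 3 * i + j < k \<longrightarrow> pairing (monom 1 i * f) (monom 1 j) = 0)"
      unfolding integral_wj_eq_pairing using less_div_3_iff[where k=k] by blast
    also have "\<dots> \<longleftrightarrow> biorth V W \<tau> k f"
      by (simp add: moment_conditions_iff_orthogonal biorth_iff_pairing)
    finally show ?thesis .
  qed
  show ?thesis
    unfolding conditions_iff_biorth using bop_monic_biorth(3) bop_eqI by auto
qed

end
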